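(* Let $T$ be any finite rooted tree with root $r$ (arbitrary numbers of children), let $(X_v)$ be a tree Markov random field on $T$ over a finite state set $\mathcal S$ whose edge transition matrices all satisfy $\|M_e\|\le\lambda$ for some $0<\lambda<1$, and let $A\subseteq\mathcal S$. Then $$\mathbf V(Z_A)\le\frac12\sum_{v\in V(T)\setminus\{r\}}\Delta(v)^2,\qquad\text{where }\Delta(v)=2\sum_{\ell\in L_v}\lambda^{d(v,\ell)}.$$ More precisely, for every vertex $u$ and every $b\in\mathcal S$, the number $Z_u$ of leaves $\ell$ of the subtree rooted at $u$ with $X_\ell\in A$ satisfies $\mathbf V(Z_u\mid X_u=b)\le\frac12\sum_{v\in V(T_u)\setminus\{u\}}\Delta(v)^2$.
   Context: A tree Markov random field on a rooted tree $T$ with root $r$ over a finite state set $\mathcal S$ assigns to each edge $e=(u,v)$ ($u$ the parent of $v$) an $|\mathcal S|\times|\mathcal S|$ row-stochastic matrix $M_e$; the $\mathcal S$-valued random variables $(X_v)_{v\in V(T)}$ are generated by drawing $X_r$ from a distribution on $\mathcal S$ and then, going down the tree, drawing each $X_v$ independently of everything else given its parent's state, with $\mathbf P[X_v=b\mid X_u=a]=M_e(a,b)$. For a real square matrix $M$, $\|M\|=\max_{x\neq 0,\ x\perp\mathbf 1}\|x^TM\|_1/\|x\|_1$, where $\mathbf 1$ is the all-ones vector. $T_u$ is the subtree rooted at $u$, $L_v$ is the set of leaves of $T_v$, and $d(v,\ell)$ is the number of edges on the path from $v$ to $\ell$. $Z_A$ is the number of leaves $\ell$ of $T$ with $X_\ell\in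 A$; conditioning on $X_u=b$ means running the process on $T_u$ started with state $b$ at $u$. $\mathbf V$ denotes variance. *)

theory Defs
  imports "HOL-Probability.Probability"
begin

text \<open>Vertex set V, root r, parent function par. The edges are (par v, v) for v in V - {r}.
  We record them as the child-to-parent relation.\<close>

definition up_edges :: "'v set \<Rightarrow> 'v \<Rightarrow> ('v \<Rightarrow> 'v) \<Rightarrow> ('v \<times> 'v) set" where
  "up_edges V r par = {(v, par v) | v. v \<in> V - {r}}"

definition rooted_tree :: "'v set \<Rightarrow> 'v \<Rightarrow> ('v \<Rightarrow> 'v) \<Rightarrow> bool" where
  "rooted_tree V r par \<longleftrightarrow> finite V \<and> r \<in> V \<and> (\<forall>v\<in>V - {r}. par v \<in> V)
     \<and> (\<forall>v\<in>V. (v, r) \<in> (up_edges V r par)\<^sup>*)"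

definition subtree :: "'v set \<Rightarrow> 'v \<Rightarrow> ('v \<Rightarrow> 'v) \<Rightarrow> 'v \<Rightarrow> 'v set" where
  "subtree V r par u = {v \<in> V. (v, u) \<in> (up_edges V r par)\<^sup>*}"

definition leaves :: "'v set \<Rightarrow> 'v \<Rightarrow> ('v \<Rightarrow> 'v) \<Rightarrow> 'v \<Rightarrow> 'v set" where
  "leaves V r par u = {l \<in> subtree V r par u. \<not> (\<exists>w\<in>V - {r}. par w = l)}"

definition tdist :: "'v set \<Rightarrow> 'v \<Rightarrow> ('v \<Rightarrow> 'v) \<Rightarrow> 'v \<Rightarrow> 'v \<Rightarrow> nat" where
  "tdist V r par v l = (LEAST k. (l, v) \<in> (up_edges V r par) ^^ k)"

definition row_stochastic :: "('s::finite \<Rightarrow> 's \<Rightarrow> real) \<Rightarrow> bool" where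
  "row_stochastic M \<longleftrightarrow> (\<forall>a b. 0 \<le> M a b) \<and> (\<forall>a. (\<Sum>b\<in>UNIV. M a b) = 1)"

definition mnorm_le :: "('s::finite \<Rightarrow> 's \<Rightarrow> real) \<Rightarrow> real \<Rightarrow> bool" where
  "mnorm_le M lam \<longleftrightarrow> (\<forall>x :: 's \<Rightarrow> real. (\<exists>i. x i \<noteq> 0) \<and> (\<Sum>i\<in>UNIV. x i) = 0 \<longrightarrow>
      (\<Sum>j\<in>UNIV. \<bar>\<Sum>i\<in>UNIV. x i * M i j\<bar>) \<le> lam * (\<Sum>i\<in>UNIV. \<bar>x i\<bar>))"

text \<open>M v is the transition matrix of the edge (par v, v). The joint law of (X_w) for w in T_u
  given X_u = b is the product of the transition probabilities along the edges of T_u;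
  assignments are total functions that are undefined outside T_u.\<close>
definition mrf_density ::
  "'v set \<Rightarrow> 'v \<Rightarrow> ('v \<Rightarrow> 'v) \<Rightarrow> ('v \<Rightarrow> 's \<Rightarrow> 's \<Rightarrow> real) \<Rightarrow> 'v \<Rightarrow> 's \<Rightarrow> ('v \<Rightarrow> 's) \<Rightarrow> real" where
  "mrf_density V r par M u b x =
     (if x u = b \<and> (\<forall>w. w \<notin> subtree V r par u \<longrightarrow> x w = undefined)
      then (\<Prod>w\<in>subtree V r par u - {u}. M w (x (par w)) (x w)) else 0)"

definition mrf_pmf ::
  "'v set \<Rightarrow> 'v \<Rightarrow> ('v \<Rightarrow> 'v) \<Rightarrow> ('v \<Rightarrow> 's \<Rightarrow> 's \<Rightarrow> real) \<Rightarrow> 'v \<Rightarrow> 's \<Rightarrow> ('v \<Rightarrow> 's) pmf" where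
  "mrf_pmf V r par M u b = embed_pmf (mrf_density V r par M u b)"

definition Zcount :: "'v set \<Rightarrow> 'v \<Rightarrow> ('v \<Rightarrow> 'v) \<Rightarrow> 's set \<Rightarrow> 'v \<Rightarrow> ('v \<Rightarrow> 's) \<Rightarrow> real" where
  "Zcount V r par A u x = real (card {l \<in> leaves V r par u. x l \<in> A})"

definition Delta :: "'v set \<Rightarrow> 'v \<Rightarrow> ('v \<Rightarrow> 'v) \<Rightarrow> real \<Rightarrow> 'v \<Rightarrow> real" where
  "Delta V r par lam v = 2 * (\<Sum>l\<in>leaves V r par v. lam ^ tdist V r par v l)"

end

theory Submission
  imports Defs
begin

(* Write D(v) = Delta(v)/2 = sum over the leaves l of T_v of lam^d(v,l).
   We prove the stronger bound  Var(Z_u | X_u = b) <= sum_{v in T_u - {u}} D(v)^2,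
   which is a quarter of the sum of the Delta(v)^2, by peeling leaves off the tree.

   More generally consider a statistic F(x) = sum_{v in S} G_v(x_v) on a parent-closed
   set S of vertices of T_u containing u.  If w is a leaf of S, then conditionally on the
   rest, F fluctuates only through G_w(X_w); replacing G_{par w} by G_{par w} + M_w G_w
   ("folding w into its parent") preserves the mean and lowers the variance by at most
   osc(G_w)^2 (law of total variance).  An edge with ||M_w|| <= lam shrinks oscillations
   by the factor lam.  So if every G_v has oscillation at most the "slack"
   D(v) - lam * sum_{children c of v in S} D(c), this budget is preserved by folding, and
   induction over S gives the bound.  The leaf indicators defining Z_u satisfy it. *)

section \<open>Trees given by a parent function\<close>

locale parent_tree =
  fixes V :: "'v set" and r :: 'v and par :: "'v \<Rightarrow> 'v"
  assumes rooted: "rooted_tree V r par"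
begin

abbreviation "R \<equiv> up_edges V r par"

lemma finite_V: "finite V"
  and par_in_V: "v \<in> V - {r} \<Longrightarrow> par v \<in> V"
  and reaches_root: "v \<in> V \<Longrightarrow> (v, r) \<in> R\<^sup>*"
  using rooted unfolding rooted_tree_def by auto

lemma R_iff: "(a, c) \<in> R \<longleftrightarrow> a \<in> V \<and> a \<noteq> r \<and> c = par a"
  by (auto simp: up_edges_def)

lemma R_functional: "(a, c) \<in> R \<Longrightarrow> (a, d) \<in> R \<Longrightarrow> c = d"
  by (auto simp: R_iff)

lemma root_no_edge: "(r, c) \<notin> R"
  by (auto simp: R_iff)

lemma finite_R: "finite R"
proof -
  have "R = (\<lambda>v. (v, par v)) ` (V - {r})" by (auto simp: up_edges_def)
  thus ?thesis using finite_V by simp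
qed

text \<open>Since edges are functional, a cycle through \<open>x\<close> also passes through every vertex
  reachable from \<open>x\<close>; in particular through the root, which has no outgoing edge.\<close>

lemma cycle_step: "(x, x) \<in> R\<^sup>+ \<Longrightarrow> (x, y) \<in> R \<Longrightarrow> (y, y) \<in> R\<^sup>+"
proof -
  assume cyc: "(x, x) \<in> R\<^sup>+" and xy: "(x, y) \<in> R"
  have "(y, x) \<in> R\<^sup>*"
    using cyc
  proof (rule converse_tranclE)
    assume "(x, x) \<in> R"
    thus ?thesis using R_functional[OF _ xy] by simp
  next
    fix z assume "(x, z) \<in> R" "(z, x) \<in> R\<^sup>+"
    thus ?thesis using R_functional[OF _ xy] by (simp add: trancl_into_rtrancl)
  qed
  thus ?thesis using xy by (rule rtrancl_into_trancl1)
qed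

lemma cycle_propagates: "(x, y) \<in> R\<^sup>* \<Longrightarrow> (x, x) \<in> R\<^sup>+ \<Longrightarrow> (y, y) \<in> R\<^sup>+"
proof (induction rule: rtrancl_induct)
  case (step y z)
  show ?case by (rule cycle_step[OF step.IH[OF step.prems] step.hyps(2)])
qed

lemma no_cycle: "(x, x) \<notin> R\<^sup>+"
proof
  assume cyc: "(x, x) \<in> R\<^sup>+"
  then obtain y where "(x, y) \<in> R" by (blast dest: tranclD)
  then have "(x, r) \<in> R\<^sup>*" using reaches_root by (simp add: R_iff)
  from cycle_propagates[OF this cyc] obtain z where "(r, z) \<in> R" by (blast dest: tranclD)
  thus False using root_no_edge by blast
qed

lemma wf_R: "wf R"
proof (rule finite_acyclic_wf[OF finite_R])
  show "acyclic R" using no_cycle by (simp add: acyclic_def)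
qed

lemma ancestors_comparable:
  "(a, c) \<in> R\<^sup>* \<Longrightarrow> (a, d) \<in> R\<^sup>* \<Longrightarrow> (c, d) \<in> R\<^sup>* \<or> (d, c) \<in> R\<^sup>*"
proof (induction rule: rtrancl_induct)
  case base thus ?case by simp
next
  case (step y z)
  from step.IH[OF step.prems] show ?case
  proof
    assume "(d, y) \<in> R\<^sup>*"
    thus ?thesis using step.hyps(2) by (blast intro: rtrancl_into_rtrancl)
  next
    assume "(y, d) \<in> R\<^sup>*"
    thus ?thesis
    proof (cases rule: converse_rtranclE)
      case base
      thus ?thesis using step.hyps(2) by blast
    next
      case (step z')
      thus ?thesis using R_functional[OF _ \<open>(y, z) \<in> R\<close>] by blast
    qed
  qed
qed

lemma subtree_subset_V: "subtree V r par u \<subseteq> V"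
  by (auto simp: subtree_def)

lemma subtree_non_root: "v \<in> subtree V r par u \<Longrightarrow> v \<noteq> u \<Longrightarrow> v \<in> V - {r}"
proof -
  assume v: "v \<in> subtree V r par u" "v \<noteq> u"
  then have "(v, u) \<in> R\<^sup>*" "v \<in> V" by (auto simp: subtree_def)
  moreover have "v \<noteq> r"
  proof
    assume "v = r"
    with \<open>(v, u) \<in> R\<^sup>*\<close> have "(r, u) \<in> R\<^sup>*" by simp
    thus False
    proof (cases rule: converse_rtranclE)
      case base thus False using v(2) \<open>v = r\<close> by simp
    next
      case (step y) thus False using root_no_edge by blast
    qed
  qed
  ultimately show ?thesis by simp
qed

lemma leaves_par: "c \<in> V - {r} \<Longrightarrow> leaves V r par c \<subseteq> leaves V r par (par c)"
proof
  fix l assume c: "c \<in> V - {r}" and l: "l \<in> leaves V r par c"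
  have "(c, par c) \<in> R" using c by (simp add: R_iff)
  moreover have "(l, c) \<in> R\<^sup>*" using l by (auto simp: leaves_def subtree_def)
  ultimately have "(l, par c) \<in> R\<^sup>*" by simp
  thus "l \<in> leaves V r par (par c)" using l by (auto simp: leaves_def subtree_def)
qed

lemma sibling_subtrees_disjoint:
  assumes "c \<in> V - {r}" "c' \<in> V - {r}" "par c = par c'" "c \<noteq> c'"
  shows "subtree V r par c \<inter> subtree V r par c' = {}"
proof (rule ccontr)
  have no_desc: "(a, a') \<notin> R\<^sup>*"
    if "a \<in> V - {r}" "a' \<in> V - {r}" "par a = par a'" "a \<noteq> a'" for a a'
  proof
    assume "(a, a') \<in> R\<^sup>*"
    then have "(par a, a') \<in> R\<^sup>*"
    proof (cases rule: converse_rtranclE)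
      case base thus ?thesis using that(4) by simp
    next
      case (step z) thus ?thesis by (simp add: R_iff)
    qed
    moreover have "(a', par a) \<in> R" using that by (simp add: R_iff)
    ultimately have "(par a, par a) \<in> R\<^sup>+" by (rule rtrancl_into_trancl1)
    thus False using no_cycle by blast
  qed
  assume "subtree V r par c \<inter> subtree V r par c' \<noteq> {}"
  then obtain l where "(l, c) \<in> R\<^sup>*" "(l, c') \<in> R\<^sup>*" by (auto simp: subtree_def)
  then have "(c, c') \<in> R\<^sup>* \<or> (c', c) \<in> R\<^sup>*" by (rule ancestors_comparable)
  moreover have "(c, c') \<notin> R\<^sup>*" using no_desc assms by blast
  moreover have "(c', c) \<notin> R\<^sup>*" using no_desc[of c' c] assms by simp
  ultimately show False by blast
qed

lemma tdist_path: "l \<in> subtree V r par c \<Longrightarrow> (l, c) \<in> R ^^ tdist V r par c l"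
proof -
  assume "l \<in> subtree V r par c"
  then have "(l, c) \<in> R\<^sup>*" by (simp add: subtree_def)
  then obtain n where "(l, c) \<in> R ^^ n" by (blast dest: rtrancl_imp_relpow)
  thus ?thesis unfolding tdist_def by (rule LeastI)
qed

lemma tdist_par_le:
  assumes "l \<in> subtree V r par c" "c \<in> V - {r}"
  shows "tdist V r par (par c) l \<le> Suc (tdist V r par c l)"
proof -
  have "(c, par c) \<in> R" using assms(2) by (simp add: R_iff)
  with tdist_path[OF assms(1)] have "(l, par c) \<in> R ^^ Suc (tdist V r par c l)" by auto
  thus ?thesis unfolding tdist_def by (rule Least_le)
qed

lemma finite_leaves: "finite (leaves V r par v)"
  by (rule finite_subset[OF _ finite_V]) (auto simp: leaves_def subtree_def)

definition leaf_weight :: "real \<Rightarrow> 'v \<Rightarrow> real" where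
  "leaf_weight lam v = (\<Sum>l\<in>leaves V r par v. lam ^ tdist V r par v l)"

lemma Delta_eq: "Delta V r par lam v = 2 * leaf_weight lam v"
  by (simp add: Delta_def leaf_weight_def)

text \<open>This keeps the oscillation budgets below
  nonnegative.\<close>

lemma leaf_weight_children:
  assumes lam: "0 < lam" "lam < 1" and C: "C \<subseteq> {c \<in> V - {r}. par c = w}"
  shows "lam * (\<Sum>c\<in>C. leaf_weight lam c) \<le> leaf_weight lam w"
proof -
  have finC: "finite C" using C finite_V by (auto intro: finite_subset)
  have "lam * (\<Sum>c\<in>C. leaf_weight lam c)
      = (\<Sum>c\<in>C. \<Sum>l\<in>leaves V r par c. lam ^ Suc (tdist V r par c l))"
    unfolding leaf_weight_def by (simp add: sum_distrib_left)
  also have "\<dots> \<le> (\<Sum>c\<in>C. \<Sum>l\<in>leaves V r par c. lam ^ tdist V r par w l)"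
  proof (intro sum_mono)
    fix c l assume c: "c \<in> C" and l: "l \<in> leaves V r par c"
    have "tdist V r par (par c) l \<le> Suc (tdist V r par c l)"
      using c C l by (intro tdist_par_le) (auto simp: leaves_def)
    moreover have "par c = w" using c C by auto
    ultimately show "lam ^ Suc (tdist V r par c l) \<le> lam ^ tdist V r par w l"
      using lam by (intro power_decreasing) auto
  qed
  also have "\<dots> = (\<Sum>l\<in>(\<Union>c\<in>C. leaves V r par c). lam ^ tdist V r par w l)"
  proof (rule sum.UNION_disjoint[symmetric, OF finC])
    show "\<forall>i\<in>C. finite (leaves V r par i)" using finite_leaves by blast
    show "\<forall>i\<in>C. \<forall>j\<in>C. i \<noteq> j \<longrightarrow> leaves V r par i \<inter> leaves V r par j = {}"
    proof (intro ballI impI)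
      fix i j assume "i \<in> C" "j \<in> C" "i \<noteq> j"
      then have "subtree V r par i \<inter> subtree V r par j = {}"
        using C by (intro sibling_subtrees_disjoint) auto
      thus "leaves V r par i \<inter> leaves V r par j = {}" unfolding leaves_def by auto
    qed
  qed
  also have "\<dots> \<le> leaf_weight lam w"
    unfolding leaf_weight_def
  proof (rule sum_mono2[OF finite_leaves])
    show "(\<Union>c\<in>C. leaves V r par c) \<subseteq> leaves V r par w"
      using C leaves_par by fastforce
  qed (use lam in auto)
  finally show ?thesis .
qed

lemma leaf_weight_leaf: "w \<in> leaves V r par u \<Longrightarrow> 0 < lam \<Longrightarrow> 1 \<le> leaf_weight lam w"
proof -
  assume w: "w \<in> leaves V r par u" and lam: "0 < lam"
  have "w \<in> leaves V r par w" using w by (auto simp: leaves_def subtree_def)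
  then have "lam ^ tdist V r par w w \<le> leaf_weight lam w"
    unfolding leaf_weight_def using lam by (intro member_le_sum finite_leaves) auto
  thus ?thesis by (simp add: tdist_def)
qed

end

section \<open>Oscillation and its contraction by stochastic matrices\<close>

definition osc_le :: "('s \<Rightarrow> real) \<Rightarrow> real \<Rightarrow> bool" where
  "osc_le f k \<longleftrightarrow> (\<forall>s s'. \<bar>f s - f s'\<bar> \<le> k)"

lemma osc_le_nonneg: "osc_le f k \<Longrightarrow> 0 \<le> k"
  unfolding osc_le_def by (metis abs_ge_zero order_trans)

lemma osc_le_add:
  assumes "osc_le f k" "osc_le g k'"
  shows "osc_le (\<lambda>s. f s + g s) (k + k')"
  unfolding osc_le_def
proof (intro allI)
  fix s s'
  have "\<bar>f s + g s - (f s' + g s')\<bar> \<le> \<bar>f s - f s'\<bar> + \<bar>g s - g s'\<bar>"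
    using abs_triangle_ineq[of "f s - f s'" "g s - g s'"] by (simp add: algebra_simps)
  also have "\<dots> \<le> k + k'" using assms unfolding osc_le_def by (intro add_mono) auto
  finally show "\<bar>f s + g s - (f s' + g s')\<bar> \<le> k + k'" .
qed

lemma osc_le_mono: "osc_le f k \<Longrightarrow> k \<le> k' \<Longrightarrow> osc_le f k'"
  unfolding osc_le_def by (meson order_trans)

lemma osc_le_midpoint:
  fixes f :: "'s::finite \<Rightarrow> real"
  assumes "osc_le f k"
  obtains c where "\<And>s. \<bar>f s - c\<bar> \<le> k / 2"
proof -
  have fin: "finite (range f)" and ne: "range f \<noteq> {}" by simp_all
  obtain s1 where s1: "Max (range f) = f s1" using Max_in[OF fin ne] by blast
  obtain s2 where s2: "Min (range f) = f s2" using Min_in[OF fin ne] by blast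
  have bounds: "f s2 \<le> f s" "f s \<le> f s1" for s
    using Max_ge[OF fin, of "f s"] Min_le[OF fin, of "f s"] s1 s2 by auto
  have width: "f s1 - f s2 \<le> k" using assms unfolding osc_le_def by (metis abs_le_D1)
  have "\<bar>f s - (f s1 + f s2) / 2\<bar> \<le> k / 2" for s
    using bounds[of s] width unfolding abs_le_iff by (auto simp: field_simps)
  thus thesis by (rule that)
qed

text \<open>A row-stochastic matrix with \<open>\<parallel>M\<parallel> \<le> lam\<close> contracts oscillations by the factor lam:
  the difference of two rows has l1 norm at most \<open>2 lam\<close> and sums to zero, so it only sees
  the deviation of \<open>g\<close> from its midpoint.\<close>

lemma osc_le_stochastic:
  fixes M :: "'s::finite \<Rightarrow> 's \<Rightarrow> real"
  assumes st: "row_stochastic M" and mn: "mnorm_le M lam" and og: "osc_le g k"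
    and lam: "0 \<le> lam"
  shows "osc_le (\<lambda>s. \<Sum>t\<in>UNIV. M s t * g t) (lam * k)"
  unfolding osc_le_def
proof (intro allI)
  fix s s'
  obtain c where c: "\<And>j. \<bar>g j - c\<bar> \<le> k / 2" using osc_le_midpoint[OF og] by blast
  have k: "0 \<le> k" using osc_le_nonneg[OF og] .
  show "\<bar>(\<Sum>t\<in>UNIV. M s t * g t) - (\<Sum>t\<in>UNIV. M s' t * g t)\<bar> \<le> lam * k"
  proof (cases "s = s'")
    case True
    thus ?thesis using k lam by simp
  next
    case False
    define x :: "'s \<Rightarrow> real" where "x i = (if i = s then 1 else 0) - (if i = s' then 1 else 0)" for i
    define y where "y j = M s j - M s' j" for j
    have "(\<Sum>i\<in>UNIV. x i) = 0" by (simp add: x_def sum_subtractf)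
    moreover have "x s \<noteq> 0" using False by (simp add: x_def)
    ultimately have "(\<Sum>j\<in>UNIV. \<bar>\<Sum>i\<in>UNIV. x i * M i j\<bar>) \<le> lam * (\<Sum>i\<in>UNIV. \<bar>x i\<bar>)"
      using mn unfolding mnorm_le_def by blast
    moreover have "(\<Sum>i\<in>UNIV. x i * M i j) = y j" for j
    proof -
      have "(\<Sum>i\<in>UNIV. x i * M i j)
          = (\<Sum>i\<in>UNIV. (if i = s then M i j else 0) - (if i = s' then M i j else 0))"
        by (intro sum.cong) (auto simp: x_def)
      thus ?thesis by (simp add: sum_subtractf y_def)
    qed
    moreover have "(\<Sum>i\<in>UNIV. \<bar>x i\<bar>) = 2"
    proof -
      have "(\<Sum>i\<in>UNIV. \<bar>x i\<bar>) = (\<Sum>i\<in>UNIV. (if i = s then 1 else 0) + (if i = s' then 1 else 0))"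
        using False by (intro sum.cong) (auto simp: x_def)
      thus ?thesis by (simp add: sum.distrib)
    qed
    ultimately have y_l1: "(\<Sum>j\<in>UNIV. \<bar>y j\<bar>) \<le> lam * 2" by simp
    have y_sum: "(\<Sum>j\<in>UNIV. y j) = 0"
      using st by (simp add: y_def sum_subtractf row_stochastic_def)
    have "(\<Sum>t\<in>UNIV. M s t * g t) - (\<Sum>t\<in>UNIV. M s' t * g t) = (\<Sum>j\<in>UNIV. y j * g j)"
      by (simp add: y_def left_diff_distrib sum_subtractf)
    also have "\<dots> = (\<Sum>j\<in>UNIV. y j * (g j - c))"
      using y_sum by (simp add: right_diff_distrib sum_subtractf sum_distrib_right[symmetric])
    also have "\<bar>\<dots>\<bar> \<le> (\<Sum>j\<in>UNIV. \<bar>y j\<bar> * (k / 2))"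
      by (rule order_trans[OF sum_abs], rule sum_mono)
         (simp only: abs_mult, rule mult_left_mono[OF c abs_ge_zero])
    also have "\<dots> = (\<Sum>j\<in>UNIV. \<bar>y j\<bar>) * (k / 2)" by (simp add: sum_distrib_right)
    also have "\<dots> \<le> lam * 2 * (k / 2)" using y_l1 k by (intro mult_right_mono) auto
    finally show ?thesis by simp
  qed
qed

lemma second_moment_osc:
  fixes m g :: "'s::finite \<Rightarrow> real"
  assumes m1: "(\<Sum>t\<in>UNIV. m t) = 1" and m0: "\<And>t. 0 \<le> m t" and og: "osc_le g k"
  shows "(\<Sum>t\<in>UNIV. m t * (a + g t - mu)\<^sup>2) \<le> (a + (\<Sum>t\<in>UNIV. m t * g t) - mu)\<^sup>2 + k\<^sup>2"
proof -
  define h where "h = (\<Sum>t\<in>UNIV. m t * g t)"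
  define z where "z = a + h - mu"
  have centered: "(\<Sum>t\<in>UNIV. m t * (g t - h)) = 0"
    by (simp add: right_diff_distrib sum_subtractf h_def sum_distrib_right[symmetric] m1)
  have "(\<Sum>t\<in>UNIV. m t * (a + g t - mu)\<^sup>2)
      = (\<Sum>t\<in>UNIV. m t * z\<^sup>2 + 2 * z * (m t * (g t - h)) + m t * (g t - h)\<^sup>2)"
    by (intro sum.cong) (auto simp: z_def power2_eq_square algebra_simps)
  also have "\<dots> = z\<^sup>2 + (\<Sum>t\<in>UNIV. m t * (g t - h)\<^sup>2)"
    by (simp add: sum.distrib sum_distrib_right[symmetric] sum_distrib_left[symmetric] m1 centered)
  also have "(\<Sum>t\<in>UNIV. m t * (g t - h)\<^sup>2) \<le> (\<Sum>t\<in>UNIV. m t * k\<^sup>2)"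
  proof (intro sum_mono mult_left_mono m0)
    fix t
    have "g t - h = (\<Sum>t'\<in>UNIV. m t' * (g t - g t'))"
      by (simp add: right_diff_distrib sum_subtractf h_def sum_distrib_right[symmetric] m1)
    also have "\<bar>\<dots>\<bar> \<le> (\<Sum>t'\<in>UNIV. m t' * k)"
      by (rule order_trans[OF sum_abs])
         (use og m0 in \<open>auto intro!: sum_mono mult_left_mono simp: abs_mult osc_le_def\<close>)
    also have "\<dots> = k" by (simp add: sum_distrib_right[symmetric] m1)
    finally show "(g t - h)\<^sup>2 \<le> k\<^sup>2" by (metis abs_ge_zero power2_abs power_mono)
  qed
  also have "(\<Sum>t\<in>UNIV. m t * k\<^sup>2) = k\<^sup>2" by (simp add: sum_distrib_right[symmetric] m1)
  finally show ?thesis by (simp add: z_def h_def)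
qed

section \<open>The Markov field restricted to parent-closed vertex sets\<close>

locale tree_mrf = parent_tree V r par for V :: "'v set" and r :: 'v and par :: "'v \<Rightarrow> 'v" +
  fixes M :: "'v \<Rightarrow> 's::finite \<Rightarrow> 's \<Rightarrow> real" and lam :: real and u :: 'v and b :: 's
  assumes stochastic: "\<forall>v\<in>V - {r}. row_stochastic (M v)"
    and lam_pos: "0 < lam" and lam_less_1: "lam < 1"
    and contracting: "\<forall>v\<in>V - {r}. mnorm_le (M v) lam"
    and u_in_V: "u \<in> V"
begin

text \<open>The field restricted to \<open>S\<close> (started in state \<open>b\<close> at \<open>u\<close>) has
  density \<open>dens S\<close> on the configurations \<open>configs S\<close>, which are undefined outside \<open>S\<close>.\<close>

definition parent_closed :: "'v set \<Rightarrow> bool" where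
  "parent_closed S \<longleftrightarrow> u \<in> S \<and> S \<subseteq> subtree V r par u \<and> (\<forall>w\<in>S - {u}. par w \<in> S)"

definition configs :: "'v set \<Rightarrow> ('v \<Rightarrow> 's) set" where
  "configs S = PiE S (\<lambda>_. UNIV)"

definition dens :: "'v set \<Rightarrow> ('v \<Rightarrow> 's) \<Rightarrow> real" where
  "dens S x = (if x u = b then \<Prod>w\<in>S - {u}. M w (x (par w)) (x w) else 0)"

definition stat :: "('v \<Rightarrow> 's \<Rightarrow> real) \<Rightarrow> 'v set \<Rightarrow> ('v \<Rightarrow> 's) \<Rightarrow> real" where
  "stat G S x = (\<Sum>v\<in>S. G v (x v))"

definition mean :: "'v set \<Rightarrow> ('v \<Rightarrow> 's \<Rightarrow> real) \<Rightarrow> real" where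
  "mean S G = (\<Sum>x\<in>configs S. dens S x * stat G S x)"

definition var :: "'v set \<Rightarrow> ('v \<Rightarrow> 's \<Rightarrow> real) \<Rightarrow> real" where
  "var S G = (\<Sum>x\<in>configs S. dens S x * (stat G S x - mean S G)\<^sup>2)"

lemma parent_closed_finite: "parent_closed S \<Longrightarrow> finite S"
  using finite_subset[OF _ finite_V] subtree_subset_V[of u] by (auto simp: parent_closed_def)

lemma parent_closed_non_root: "parent_closed S \<Longrightarrow> w \<in> S - {u} \<Longrightarrow> w \<in> V - {r}"
  using subtree_non_root by (auto simp: parent_closed_def)

text \<open>Parent-closed sets are built from \<open>{u}\<close> by adding leaves: removing a vertex of \<open>S\<close> that
  is minimal for the (well-founded) child-to-parent relation keeps \<open>S\<close> parent-closed.\<close>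

lemma parent_closed_induct [consumes 1, case_names root leaf]:
  assumes "parent_closed S" and base: "Q {u}"
    and step: "\<And>S w. parent_closed S \<Longrightarrow> Q S \<Longrightarrow> w \<notin> S \<Longrightarrow> w \<in> subtree V r par u - {u}
        \<Longrightarrow> par w \<in> S \<Longrightarrow> Q (insert w S)"
  shows "Q S"
  using assms(1)
proof (induction "card S" arbitrary: S rule: less_induct)
  case less
  show ?case
  proof (cases "S = {u}")
    case True thus ?thesis using base by simp
  next
    case False
    with less.prems have "S - {u} \<noteq> {}" unfolding parent_closed_def by auto
    then obtain w where w: "w \<in> S - {u}" and w_min: "\<And>y. (y, w) \<in> R \<Longrightarrow> y \<notin> S - {u}"
      using wfE_min'[OF wf_R] by metis
    have w_edge: "(w, par w) \<in> R"
      using parent_closed_non_root[OF less.prems w] by (simp add: R_iff)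
    have closed: "parent_closed (S - {w})"
      unfolding parent_closed_def
    proof (intro conjI ballI)
      show "u \<in> S - {w}" "S - {w} \<subseteq> subtree V r par u"
        using less.prems w unfolding parent_closed_def by auto
      fix v assume v: "v \<in> S - {w} - {u}"
      have "(v, par v) \<in> R" using parent_closed_non_root[OF less.prems] v by (simp add: R_iff)
      then have "par v \<noteq> w" using w_min v by auto
      thus "par v \<in> S - {w}" using less.prems v unfolding parent_closed_def by auto
    qed
    have "card (S - {w}) < card S"
      using w parent_closed_finite[OF less.prems] by (intro card_Diff1_less) auto
    from less.hyps[OF this closed] have "Q (S - {w})" .
    moreover have "w \<in> subtree V r par u - {u}"
      using less.prems w unfolding parent_closed_def by auto
    moreover have "par w \<in> S - {w}"
      using less.prems w w_edge no_cycle[of w] unfolding parent_closed_def by auto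
    ultimately have "Q (insert w (S - {w}))" by (intro step[OF closed]) auto
    thus ?thesis using w by (simp add: insert_absorb)
  qed
qed

lemma sum_configs_insert:
  assumes "w \<notin> S"
  shows "(\<Sum>x\<in>configs (insert w S). f x) = (\<Sum>y\<in>configs S. \<Sum>t\<in>UNIV. f (y(w := t)))"
proof -
  have "(\<Sum>x\<in>configs (insert w S). f x) = (\<Sum>(t, y)\<in>UNIV \<times> configs S. f (y(w := t)))"
    unfolding configs_def PiE_insert_eq
    by (subst sum.reindex[OF inj_combinator[OF assms]]) (simp add: case_prod_beta)
  also have "\<dots> = (\<Sum>y\<in>configs S. \<Sum>t\<in>UNIV. f (y(w := t)))"
    by (simp add: sum.cartesian_product[symmetric] sum.swap[of _ UNIV])
  finally show ?thesis .
qed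

lemma sum_configs_root:
  "(\<Sum>x\<in>configs {u}. f x) = (\<Sum>t\<in>UNIV. f (\<lambda>a. if a = u then t else undefined))"
proof -
  have "(\<Sum>x\<in>configs {u}. f x) = (\<Sum>y\<in>configs {}. \<Sum>t\<in>UNIV. f (y(u := t)))"
    by (rule sum_configs_insert) simp
  also have "configs {} = {\<lambda>_. undefined}" by (simp add: configs_def)
  finally show ?thesis by (simp add: fun_upd_def)
qed

lemma dens_nonneg: "parent_closed S \<Longrightarrow> 0 \<le> dens S x"
  using stochastic parent_closed_non_root
  unfolding dens_def row_stochastic_def by (auto intro!: prod_nonneg)

text \<open>Adding a leaf \<open>w\<close> to a parent-closed set \<open>S\<close>: the density factors through the
  transition kernel of \<open>w\<close>, so sums over the larger configuration space are iterated sums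
  (the Markov property).\<close>

context
  fixes S :: "'v set" and w :: 'v
  assumes S_closed: "parent_closed S" and w_new: "w \<notin> S"
    and w_sub: "w \<in> subtree V r par u - {u}" and par_w: "par w \<in> S"
begin

lemma finite_S: "finite S"
  by (rule parent_closed_finite[OF S_closed])

lemma w_non_root: "w \<in> V - {r}"
  using w_sub subtree_non_root by blast

lemma dens_insert: "dens (insert w S) (y(w := t)) = dens S y * M w (y (par w)) t"
proof -
  have wu: "w \<noteq> u" and pw: "par w \<noteq> w" using w_sub w_new par_w by auto
  have "(\<Prod>v\<in>S - {u}. M v ((y(w := t)) (par v)) ((y(w := t)) v))
      = (\<Prod>v\<in>S - {u}. M v (y (par v)) (y v))"
  proof (rule prod.cong)
    fix v assume "v \<in> S - {u}"
    then have "par v \<in> S" "v \<noteq> w" using S_closed w_new unfolding parent_closed_def by auto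
    thus "M v ((y(w := t)) (par v)) ((y(w := t)) v) = M v (y (par v)) (y v)" using w_new by auto
  qed simp
  moreover have "insert w S - {u} = insert w (S - {u})" using wu by auto
  ultimately show ?thesis
    unfolding dens_def using wu pw w_new finite_S by (simp add: mult.commute)
qed

lemma sum_insert_leaf:
  "(\<Sum>x\<in>configs (insert w S). dens (insert w S) x * \<phi> x)
     = (\<Sum>y\<in>configs S. dens S y * (\<Sum>t\<in>UNIV. M w (y (par w)) t * \<phi> (y(w := t))))"
  by (simp add: sum_configs_insert[OF w_new] dens_insert mult.assoc sum_distrib_left)

lemma stat_insert: "stat G (insert w S) (y(w := t)) = stat G S y + G w t"
  unfolding stat_def using w_new finite_S by (auto intro!: sum.cong simp: add.commute)

end

lemma dens_sum: "parent_closed S \<Longrightarrow> (\<Sum>x\<in>configs S. dens S x) = 1"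
proof (induction S rule: parent_closed_induct)
  case root
  then show ?case by (simp add: sum_configs_root dens_def)
next
  case (leaf S w)
  have ins: "parent_closed S" "w \<notin> S" "w \<in> subtree V r par u - {u}" "par w \<in> S"
    using leaf by auto
  have "(\<Sum>x\<in>configs (insert w S). dens (insert w S) x * 1)
      = (\<Sum>y\<in>configs S. dens S y * (\<Sum>t\<in>UNIV. M w (y (par w)) t))"
    using sum_insert_leaf[OF ins, of "\<lambda>_. 1"] by simp
  also have "\<dots> = 1"
    using leaf.IH stochastic w_non_root[OF ins] by (simp add: row_stochastic_def)
  finally show ?case by simp
qed

section \<open>Folding a leaf into its parent\<close>

text \<open>Replace the contribution \<open>G w\<close> of the leaf \<open>w\<close> by its conditional expectation given the
  parent's state, added to the parent's contribution.\<close>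

definition fold_leaf :: "'v \<Rightarrow> ('v \<Rightarrow> 's \<Rightarrow> real) \<Rightarrow> 'v \<Rightarrow> 's \<Rightarrow> real" where
  "fold_leaf w G v s = G v s + (if v = par w then \<Sum>t\<in>UNIV. M w s t * G w t else 0)"

definition slack :: "'v set \<Rightarrow> 'v \<Rightarrow> real" where
  "slack S v = leaf_weight lam v - lam * (\<Sum>c\<in>{c \<in> S - {u}. par c = v}. leaf_weight lam c)"

context
  fixes S :: "'v set" and w :: 'v
  assumes S_closed: "parent_closed S" and w_new: "w \<notin> S"
    and w_sub: "w \<in> subtree V r par u - {u}" and par_w: "par w \<in> S"
begin

lemmas leaf_ext = S_closed w_new w_sub par_w

lemma stat_fold_leaf:
  "stat (fold_leaf w G) S y = stat G S y + (\<Sum>t\<in>UNIV. M w (y (par w)) t * G w t)"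
  unfolding stat_def fold_leaf_def
  using finite_S[OF leaf_ext] par_w by (simp add: sum.distrib)

text \<open>Law of total variance for one leaf: folding keeps the mean, and the variance lost is at
  most the squared oscillation of the leaf's contribution.\<close>

lemma mean_fold_leaf: "mean (insert w S) G = mean S (fold_leaf w G)"
proof -
  have "row_stochastic (M w)" using stochastic w_non_root[OF leaf_ext] by blast
  then have "(\<Sum>t\<in>UNIV. M w s t * (a + G w t)) = a + (\<Sum>t\<in>UNIV. M w s t * G w t)" for s a
    by (simp add: distrib_left sum.distrib sum_distrib_right[symmetric] row_stochastic_def)
  thus ?thesis
    unfolding mean_def sum_insert_leaf[OF leaf_ext]
      stat_insert[OF leaf_ext] stat_fold_leaf by simp
qed

lemma var_fold_leaf:
  assumes osc: "osc_le (G w) k"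
  shows "var (insert w S) G \<le> var S (fold_leaf w G) + k\<^sup>2"
proof -
  have st: "row_stochastic (M w)" using stochastic w_non_root[OF leaf_ext] by blast
  define mu where "mu = mean S (fold_leaf w G)"
  have "var (insert w S) G
      = (\<Sum>y\<in>configs S. dens S y *
           (\<Sum>t\<in>UNIV. M w (y (par w)) t * (stat G S y + G w t - mu)\<^sup>2))"
    unfolding var_def sum_insert_leaf[OF leaf_ext] stat_insert[OF leaf_ext] mean_fold_leaf mu_def ..
  also have "\<dots> \<le> (\<Sum>y\<in>configs S. dens S y *
      ((stat G S y + (\<Sum>t\<in>UNIV. M w (y (par w)) t * G w t) - mu)\<^sup>2 + k\<^sup>2))"
    using st dens_nonneg[OF S_closed] unfolding row_stochastic_def
    by (intro sum_mono mult_left_mono second_moment_osc[OF _ _ osc]) auto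
  also have "\<dots> = var S (fold_leaf w G) + k\<^sup>2 * (\<Sum>y\<in>configs S. dens S y)"
    unfolding var_def mu_def stat_fold_leaf
    by (simp add: distrib_left sum.distrib sum_distrib_left sum_distrib_right mult.commute)
  also have "\<dots> = var S (fold_leaf w G) + k\<^sup>2" using dens_sum[OF S_closed] by simp
  finally show ?thesis .
qed

text \<open>Folding respects the oscillation budgets: \<open>w\<close> is a leaf, so its budget is its whole
  weight, and the parent's budget grows by exactly the oscillation of the folded term.\<close>

lemma slack_leaf: "slack (insert w S) w = leaf_weight lam w"
proof -
  have "par c \<noteq> w" if "c \<in> insert w S - {u}" for c
    using that S_closed w_new par_w unfolding parent_closed_def by auto
  then have "{c \<in> insert w S - {u}. par c = w} = {}" by auto
  then have "(\<Sum>c\<in>{c \<in> insert w S - {u}. par c = w}. leaf_weight lam c) = 0"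
    by (simp only: sum.empty)
  thus ?thesis unfolding slack_def by simp
qed

lemma slack_remove_leaf:
  assumes "v \<in> S"
  shows "slack S v = slack (insert w S) v + (if v = par w then lam * leaf_weight lam w else 0)"
proof (cases "v = par w")
  case True
  have "{c \<in> insert w S - {u}. par c = v} = insert w {c \<in> S - {u}. par c = v}"
    using True w_sub by auto
  moreover have "finite {c \<in> S - {u}. par c = v}" using finite_S[OF leaf_ext] by simp
  ultimately show ?thesis using True w_new by (simp add: slack_def algebra_simps)
next
  case False
  then have "{c \<in> insert w S - {u}. par c = v} = {c \<in> S - {u}. par c = v}" by auto
  thus ?thesis using False by (simp add: slack_def)
qed

lemma osc_fold_leaf:
  assumes osc: "\<forall>v\<in>insert w S. osc_le (G v) (slack (insert w S) v)"
  shows "\<forall>v\<in>S. osc_le (fold_leaf w G v) (slack S v)"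
proof
  fix v assume v: "v \<in> S"
  have ov: "osc_le (G v) (slack (insert w S) v)" using osc v by auto
  show "osc_le (fold_leaf w G v) (slack S v)"
  proof (cases "v = par w")
    case True
    have "osc_le (G w) (leaf_weight lam w)" using osc slack_leaf by auto
    then have "osc_le (\<lambda>s. \<Sum>t\<in>UNIV. M w s t * G w t) (lam * leaf_weight lam w)"
      using stochastic contracting w_non_root[OF leaf_ext] lam_pos
      by (intro osc_le_stochastic) auto
    moreover have "fold_leaf w G v = (\<lambda>s. G v s + (\<Sum>t\<in>UNIV. M w s t * G w t))"
      using True by (simp add: fold_leaf_def fun_eq_iff)
    ultimately show ?thesis
      using osc_le_add[OF ov] True slack_remove_leaf[OF v] by simp
  next
    case False
    then have "fold_leaf w G v = G v" by (simp add: fold_leaf_def fun_eq_iff)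
    thus ?thesis using ov slack_remove_leaf[OF v] False by simp
  qed
qed

end

text \<open>On \<open>{u}\<close> the field is the point mass at \<open>b\<close>.\<close>

lemma var_root: "var {u} G = 0"
proof -
  have dens_root: "dens {u} x = (if x u = b then 1 else 0)" for x by (simp add: dens_def)
  have sum_root: "(\<Sum>t\<in>UNIV. (if t = b then 1 else 0) * f t) = f b" for f :: "'s \<Rightarrow> real"
  proof -
    have "(\<Sum>t\<in>UNIV. (if t = b then 1 else 0) * f t) = (\<Sum>t\<in>UNIV. if t = b then f t else 0)"
      by (intro sum.cong) auto
    thus ?thesis by simp
  qed
  have "mean {u} G = G u b"
    unfolding mean_def sum_configs_root dens_root by (simp add: stat_def sum_root)
  thus ?thesis
    unfolding var_def sum_configs_root dens_root by (simp add: stat_def sum_root)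
qed

lemma var_bound:
  "parent_closed S \<Longrightarrow> \<forall>v\<in>S. osc_le (G v) (slack S v)
     \<Longrightarrow> var S G \<le> (\<Sum>v\<in>S - {u}. (leaf_weight lam v)\<^sup>2)"
proof (induction S arbitrary: G rule: parent_closed_induct)
  case root
  then show ?case by (simp add: var_root)
next
  case (leaf S w)
  have ins: "parent_closed S" "w \<notin> S" "w \<in> subtree V r par u - {u}" "par w \<in> S"
    using leaf by auto
  have "osc_le (G w) (leaf_weight lam w)" using leaf.prems slack_leaf[OF ins] by auto
  then have "var (insert w S) G \<le> var S (fold_leaf w G) + (leaf_weight lam w)\<^sup>2"
    by (rule var_fold_leaf[OF ins])
  also have "var S (fold_leaf w G) \<le> (\<Sum>v\<in>S - {u}. (leaf_weight lam v)\<^sup>2)"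
    using leaf.IH osc_fold_leaf[OF ins leaf.prems] by blast
  also have "(\<Sum>v\<in>S - {u}. (leaf_weight lam v)\<^sup>2) + (leaf_weight lam w)\<^sup>2
      = (\<Sum>v\<in>insert w S - {u}. (leaf_weight lam v)\<^sup>2)"
    using ins parent_closed_finite[OF ins(1)] by (simp add: insert_Diff_if)
  finally show ?case by simp
qed

lemma subtree_parent_closed: "parent_closed (subtree V r par u)"
  unfolding parent_closed_def
proof (intro conjI ballI)
  show "u \<in> subtree V r par u" using u_in_V by (simp add: subtree_def)
  fix w assume w: "w \<in> subtree V r par u - {u}"
  then have "(w, u) \<in> R\<^sup>*" by (simp add: subtree_def)
  then have "(par w, u) \<in> R\<^sup>*"
  proof (cases rule: converse_rtranclE)
    case base thus ?thesis using w by simp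
  next
    case (step y) thus ?thesis by (simp add: R_iff)
  qed
  moreover have "par w \<in> V" using par_in_V subtree_non_root w by blast
  ultimately show "par w \<in> subtree V r par u" by (simp add: subtree_def)
qed simp

lemma pmf_mrf_pmf:
  defines "T \<equiv> subtree V r par u"
  shows "pmf (mrf_pmf V r par M u b) x = (if x \<in> configs T then dens T x else 0)"
proof -
  let ?d = "mrf_density V r par M u b"
  have d_eq: "?d x = (if x \<in> configs T then dens T x else 0)" for x
    unfolding mrf_density_def configs_def dens_def T_def
    by (auto simp: PiE_def extensional_def)
  have d_nonneg: "0 \<le> ?d x" for x
    unfolding d_eq using dens_nonneg[OF subtree_parent_closed] by (simp add: T_def)
  have fin: "finite (configs T)"
    using parent_closed_finite[OF subtree_parent_closed] by (simp add: configs_def T_def finite_PiE)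
  have "(\<integral>\<^sup>+x. ennreal (?d x) \<partial>count_space UNIV) = (\<Sum>x\<in>configs T. ennreal (?d x))"
    by (rule nn_integral_count_space'[OF fin]) (auto simp: d_eq)
  also have "\<dots> = (\<Sum>x\<in>configs T. ennreal (dens T x))" by (simp add: d_eq)
  also have "\<dots> = ennreal (\<Sum>x\<in>configs T. dens T x)"
    using dens_nonneg[OF subtree_parent_closed] by (intro sum_ennreal) (simp add: T_def)
  also have "(\<Sum>x\<in>configs T. dens T x) = 1"
    using dens_sum[OF subtree_parent_closed] by (simp add: T_def)
  finally have "(\<integral>\<^sup>+x. ennreal (?d x) \<partial>count_space UNIV) = 1" by simp
  then have "pmf (embed_pmf ?d) x = ?d x" by (rule pmf_embed_pmf[OF d_nonneg])
  thus ?thesis unfolding mrf_pmf_def d_eq .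
qed

lemma expectation_mrf_pmf:
  defines "T \<equiv> subtree V r par u"
  shows "measure_pmf.expectation (mrf_pmf V r par M u b) f = (\<Sum>x\<in>configs T. dens T x * f x)"
proof -
  have fin: "finite (configs T)"
    using parent_closed_finite[OF subtree_parent_closed] by (simp add: configs_def T_def finite_PiE)
  have "measure_pmf.expectation (mrf_pmf V r par M u b) f
      = (\<Sum>x\<in>configs T. pmf (mrf_pmf V r par M u b) x *\<^sub>R f x)"
  proof (rule integral_measure_pmf[OF fin])
    fix x assume "x \<in> set_pmf (mrf_pmf V r par M u b)"
    thus "x \<in> configs T" using pmf_mrf_pmf by (auto simp: set_pmf_iff T_def split: if_splits)
  qed
  also have "\<dots> = (\<Sum>x\<in>configs T. dens T x * f x)"
    by (intro sum.cong) (auto simp: pmf_mrf_pmf T_def)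
  finally show ?thesis .
qed

text \<open>They fit their budgets: a leaf has no children and weight at least 1, an inner vertex
  contributes nothing and has nonnegative slack by superadditivity of the weights.\<close>

definition leaf_indicator :: "'s set \<Rightarrow> 'v \<Rightarrow> 's \<Rightarrow> real" where
  "leaf_indicator A v s = (if v \<in> leaves V r par u \<and> s \<in> A then 1 else 0)"

lemma Zcount_eq_stat: "Zcount V r par A u x = stat (leaf_indicator A) (subtree V r par u) x"
proof -
  have "{l \<in> leaves V r par u. x l \<in> A}
      = {v \<in> subtree V r par u. v \<in> leaves V r par u \<and> x v \<in> A}"
    by (auto simp: leaves_def)
  then have "Zcount V r par A u x
      = (\<Sum>v\<in>{v \<in> subtree V r par u. v \<in> leaves V r par u \<and> x v \<in> A}. 1)"
    by (simp add: Zcount_def)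
  also have "\<dots> = (\<Sum>v\<in>subtree V r par u. if v \<in> leaves V r par u \<and> x v \<in> A then 1 else 0)"
    using parent_closed_finite[OF subtree_parent_closed] by (rule sum.inter_filter)
  finally show ?thesis unfolding stat_def leaf_indicator_def .
qed

lemma leaf_indicator_osc:
  assumes w: "w \<in> subtree V r par u"
  shows "osc_le (leaf_indicator A w) (slack (subtree V r par u) w)"
proof -
  let ?C = "{c \<in> subtree V r par u - {u}. par c = w}"
  have C_sub: "?C \<subseteq> {c \<in> V - {r}. par c = w}" using subtree_non_root by blast
  show ?thesis
  proof (cases "w \<in> leaves V r par u")
    case True
    then have C_empty: "?C = {}" using C_sub by (auto simp: leaves_def)
    have "slack (subtree V r par u) w = leaf_weight lam w"
      unfolding slack_def by (simp only: C_empty sum.empty mult_zero_right diff_zero)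
    moreover have "1 \<le> leaf_weight lam w" using True lam_pos by (rule leaf_weight_leaf)
    moreover have "osc_le (leaf_indicator A w) 1" by (simp add: osc_le_def leaf_indicator_def)
    ultimately show ?thesis by (metis osc_le_mono)
  next
    case False
    have "lam * (\<Sum>c\<in>?C. leaf_weight lam c) \<le> leaf_weight lam w"
      by (rule leaf_weight_children[OF lam_pos lam_less_1 C_sub])
    then have "0 \<le> slack (subtree V r par u) w" by (simp add: slack_def)
    thus ?thesis using False by (simp add: osc_le_def leaf_indicator_def)
  qed
qed

theorem variance_leaf_count:
  "measure_pmf.variance (mrf_pmf V r par M u b) (Zcount V r par A u)
     \<le> (\<Sum>v\<in>subtree V r par u - {u}. (leaf_weight lam v)\<^sup>2)"
proof -
  let ?T = "subtree V r par u"
  have "measure_pmf.variance (mrf_pmf V r par M u b) (Zcount V r par A u) = var ?T (leaf_indicator A)"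
    unfolding expectation_mrf_pmf var_def mean_def Zcount_eq_stat ..
  also have "\<dots> \<le> (\<Sum>v\<in>?T - {u}. (leaf_weight lam v)\<^sup>2)"
    using var_bound[OF subtree_parent_closed] leaf_indicator_osc by blast
  finally show ?thesis .
qed

end

text \<open>Since \<open>Delta(v) = 2 D(v)\<close>, the bound above is a quarter of the sum of the squares of the
  \<open>Delta(v)\<close>, hence in particular at most half of it.\<close>

theorem mainTheorem5:
  fixes V :: "'v set" and r :: 'v and par :: "'v \<Rightarrow> 'v"
    and M :: "'v \<Rightarrow> 's::finite \<Rightarrow> 's \<Rightarrow> real" and lam :: real and A :: "'s set"
    and u :: 'v and b :: 's
  assumes "rooted_tree V r par"
    and "\<forall>v\<in>V - {r}. row_stochastic (M v)"
    and "0 < lam" and "lam < 1"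
    and "\<forall>v\<in>V - {r}. mnorm_le (M v) lam"
    and "u \<in> V"
  shows "measure_pmf.variance (mrf_pmf V r par M u b) (Zcount V r par A u)
           \<le> 1/2 * (\<Sum>v\<in>subtree V r par u - {u}. (Delta V r par lam v)^2)"
proof -
  interpret tree_mrf V r par M lam u b
    using assms by (simp add: tree_mrf_def tree_mrf_axioms_def parent_tree_def)
  have "measure_pmf.variance (mrf_pmf V r par M u b) (Zcount V r par A u)
      \<le> (\<Sum>v\<in>subtree V r par u - {u}. (leaf_weight lam v)\<^sup>2)"
    by (rule variance_leaf_count)
  also have "\<dots> \<le> (\<Sum>v\<in>subtree V r par u - {u}. 1/2 * (Delta V r par lam v)^2)"
    by (intro sum_mono) (simp add: Delta_eq power2_eq_square)
  finally show ?thesis by (simp add: sum_distrib_left)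
qed

end
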